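(* Let $G$ be a finite group, and let $a_1,a_2,a_3,a_4$ be independent uniformly random elements of $G$. Then each of the probabilities \[ Pr(a_1a_2a_3a_4=a_3a_2a_4a_1),\quad Pr(a_1a_2a_3a_4=a_4a_2a_1a_3), \] \[ Pr(a_1a_2a_3a_4=a_2a_4a_3a_1),\quad Pr(a_1a_2a_3a_4=a_4a_1a_3a_2) \] equals $Pr^4(G)$, the probability that $a_1a_2a_3a_4=a_4a_3a_2a_1$. *)

theory Defs
  imports "HOL-Algebra.Group" Complex_Main
begin

definition prob4 :: "('a, 'b) monoid_scheme \<Rightarrow>
    ('a \<Rightarrow> 'a \<Rightarrow> 'a \<Rightarrow> 'a \<Rightarrow> bool) \<Rightarrow> real" where
  "prob4 G P = real (card {(a1, a2, a3, a4). a1 \<in> carrier G \<and> a2 \<in> carrier G \<and>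
       a3 \<in> carrier G \<and> a4 \<in> carrier G \<and> P a1 a2 a3 a4})
     / real (card (carrier G)) ^ 4"

definition Pr4 :: "('a, 'b) monoid_scheme \<Rightarrow> real" where
  "Pr4 G = prob4 G (\<lambda>a1 a2 a3 a4.
      a1 \<otimes>\<^bsub>G\<^esub> a2 \<otimes>\<^bsub>G\<^esub> a3 \<otimes>\<^bsub>G\<^esub> a4 =
      a4 \<otimes>\<^bsub>G\<^esub> a3 \<otimes>\<^bsub>G\<^esub> a2 \<otimes>\<^bsub>G\<^esub> a1)"

end

theory Submission
  imports Defs
begin

text \<open>Each of the four identities is related to a1 a2 a3 a4 = a4 a3 a2 a1 by a single
  substitution a1 := a4 a1, a4 := a4 a3, a1 := a2 a1 or a4 := a4 a1, which turns one identity
  into the other up to a cancellation. Such a substitution permutes the quadruples in G^4,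
  so it preserves the probability of an identity.\<close>

lemma prob4_bij_cong:
  fixes G (structure)
  assumes "bij_betw h (carrier G \<times> carrier G \<times> carrier G \<times> carrier G)
                       (carrier G \<times> carrier G \<times> carrier G \<times> carrier G)"
    and "\<And>a1 a2 a3 a4. \<lbrakk>a1 \<in> carrier G; a2 \<in> carrier G; a3 \<in> carrier G; a4 \<in> carrier G\<rbrakk> \<Longrightarrow>
      (case h (a1, a2, a3, a4) of (b1, b2, b3, b4) \<Rightarrow> R b1 b2 b3 b4) \<longleftrightarrow> P a1 a2 a3 a4"
  shows "prob4 G P = prob4 G R"
proof -
  let ?Q = "carrier G \<times> carrier G \<times> carrier G \<times> carrier G"
  have set_eq: "{(a1, a2, a3, a4). a1 \<in> carrier G \<and> a2 \<in> carrier G \<and> a3 \<in> carrier G \<and>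
      a4 \<in> carrier G \<and> S a1 a2 a3 a4} = {t \<in> ?Q. case t of (a1, a2, a3, a4) \<Rightarrow> S a1 a2 a3 a4}"
    for S :: "'a \<Rightarrow> 'a \<Rightarrow> 'a \<Rightarrow> 'a \<Rightarrow> bool"
    by auto
  have "bij_betw h {t \<in> ?Q. case t of (a1, a2, a3, a4) \<Rightarrow> P a1 a2 a3 a4}
                   {t \<in> ?Q. case t of (a1, a2, a3, a4) \<Rightarrow> R a1 a2 a3 a4}"
  proof (rule bij_betw_Collect[OF assms(1)])
    fix t
    assume "t \<in> ?Q"
    then show "(case h t of (a1, a2, a3, a4) \<Rightarrow> R a1 a2 a3 a4) \<longleftrightarrow>
               (case t of (a1, a2, a3, a4) \<Rightarrow> P a1 a2 a3 a4)"
      using assms(2) by (cases t) fastforce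
  qed
  then show ?thesis
    unfolding prob4_def set_eq by (simp add: bij_betw_same_card)
qed

context group
begin

lemma prob4_subst_first:
  assumes "\<And>a2 a3 a4. \<lbrakk>a2 \<in> carrier G; a3 \<in> carrier G; a4 \<in> carrier G\<rbrakk> \<Longrightarrow> c a2 a3 a4 \<in> carrier G"
    and "\<And>a1 a2 a3 a4. \<lbrakk>a1 \<in> carrier G; a2 \<in> carrier G; a3 \<in> carrier G; a4 \<in> carrier G\<rbrakk> \<Longrightarrow>
      R (c a2 a3 a4 \<otimes> a1) a2 a3 a4 \<longleftrightarrow> P a1 a2 a3 a4"
  shows "prob4 G P = prob4 G R"
proof (rule prob4_bij_cong)
  show "bij_betw (\<lambda>(a1, a2, a3, a4). (c a2 a3 a4 \<otimes> a1, a2, a3, a4))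
          (carrier G \<times> carrier G \<times> carrier G \<times> carrier G)
          (carrier G \<times> carrier G \<times> carrier G \<times> carrier G)"
    by (rule bij_betw_byWitness[where f' = "\<lambda>(a1, a2, a3, a4). (inv c a2 a3 a4 \<otimes> a1, a2, a3, a4)"])
      (auto simp: assms(1) m_assoc[symmetric])
qed (simp add: assms(2))

lemma prob4_subst_last:
  assumes "\<And>a1 a2 a3. \<lbrakk>a1 \<in> carrier G; a2 \<in> carrier G; a3 \<in> carrier G\<rbrakk> \<Longrightarrow> c a1 a2 a3 \<in> carrier G"
    and "\<And>a1 a2 a3 a4. \<lbrakk>a1 \<in> carrier G; a2 \<in> carrier G; a3 \<in> carrier G; a4 \<in> carrier G\<rbrakk> \<Longrightarrow>
      R a1 a2 a3 (a4 \<otimes> c a1 a2 a3) \<longleftrightarrow> P a1 a2 a3 a4"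
  shows "prob4 G P = prob4 G R"
proof (rule prob4_bij_cong)
  show "bij_betw (\<lambda>(a1, a2, a3, a4). (a1, a2, a3, a4 \<otimes> c a1 a2 a3))
          (carrier G \<times> carrier G \<times> carrier G \<times> carrier G)
          (carrier G \<times> carrier G \<times> carrier G \<times> carrier G)"
    by (rule bij_betw_byWitness[where f' = "\<lambda>(a1, a2, a3, a4). (a1, a2, a3, a4 \<otimes> inv c a1 a2 a3)"])
      (auto simp: assms(1) m_assoc)
qed (simp add: assms(2))

end

theorem mainTheorem8:
  fixes G (structure)
  assumes "group G" and "finite (carrier G)"
  shows "prob4 G (\<lambda>a1 a2 a3 a4. a1 \<otimes> a2 \<otimes> a3 \<otimes> a4 = a3 \<otimes> a2 \<otimes> a4 \<otimes> a1) = Pr4 G \<and>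
         prob4 G (\<lambda>a1 a2 a3 a4. a1 \<otimes> a2 \<otimes> a3 \<otimes> a4 = a4 \<otimes> a2 \<otimes> a1 \<otimes> a3) = Pr4 G \<and>
         prob4 G (\<lambda>a1 a2 a3 a4. a1 \<otimes> a2 \<otimes> a3 \<otimes> a4 = a2 \<otimes> a4 \<otimes> a3 \<otimes> a1) = Pr4 G \<and>
         prob4 G (\<lambda>a1 a2 a3 a4. a1 \<otimes> a2 \<otimes> a3 \<otimes> a4 = a4 \<otimes> a1 \<otimes> a3 \<otimes> a2) = Pr4 G"
proof -
  interpret group G by fact
  have "prob4 G (\<lambda>a1 a2 a3 a4. a1 \<otimes> a2 \<otimes> a3 \<otimes> a4 = a3 \<otimes> a2 \<otimes> a4 \<otimes> a1) = Pr4 G"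
    unfolding Pr4_def by (rule prob4_subst_first[where c = "\<lambda>a2 a3 a4. a4"]) (simp_all add: m_assoc)
  moreover have "prob4 G (\<lambda>a1 a2 a3 a4. a1 \<otimes> a2 \<otimes> a3 \<otimes> a4 = a4 \<otimes> a2 \<otimes> a1 \<otimes> a3) = Pr4 G"
    unfolding Pr4_def by (rule sym, rule prob4_subst_last[where c = "\<lambda>a1 a2 a3. a3"])
      (simp_all add: m_assoc[symmetric])
  moreover have "prob4 G (\<lambda>a1 a2 a3 a4. a1 \<otimes> a2 \<otimes> a3 \<otimes> a4 = a2 \<otimes> a4 \<otimes> a3 \<otimes> a1) = Pr4 G"
    unfolding Pr4_def by (rule sym, rule prob4_subst_first[where c = "\<lambda>a2 a3 a4. a2"])
      (simp_all add: m_assoc)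
  moreover have "prob4 G (\<lambda>a1 a2 a3 a4. a1 \<otimes> a2 \<otimes> a3 \<otimes> a4 = a4 \<otimes> a1 \<otimes> a3 \<otimes> a2) = Pr4 G"
    unfolding Pr4_def by (rule prob4_subst_last[where c = "\<lambda>a1 a2 a3. a1"])
      (simp_all add: m_assoc[symmetric])
  ultimately show ?thesis by blast
qed

end
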